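(* Let $N\geq 10^{100000}$ be a real number and $f_N(x)=\dfrac{\log N+\log(x-1)}{\log x}$ for real $x>1$. Let $M\geq 10^5$ be a real number. Then for every $x$ with $M\leq x\leq 2M$ and every $1\leq k\leq 6$, $$0.999999<\frac{f_N^{(k)}(M)}{f_N^{(k)}(x)}<\gamma_k,$$ where $\gamma_1=2.24808$, $\gamma_2=4.53426$, $\gamma_3=9.11515$, $\gamma_4=18.2994$, $\gamma_5=36.7099$, $\gamma_6=73.6077$.
   Context: $f_N^{(k)}$ denotes the $k$-th derivative of $f_N$; $\log$ is the natural logarithm. *)

theory Defs
  imports "HOL-Analysis.Analysis"
begin

definition fN :: "real \<Rightarrow> real \<Rightarrow> real" where
  "fN N x = (ln N + ln (x - 1)) / ln x"

definition gamma_const :: "nat \<Rightarrow> real" where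
  "gamma_const k = (if k = 1 then 2.24808 else if k = 2 then 4.53426
     else if k = 3 then 9.11515 else if k = 4 then 18.2994
     else if k = 5 then 36.7099 else 73.6077)"

end

theory Submission
  imports Defs "HOL-Computational_Algebra.Polynomial" "HOL-Complex_Analysis.Cauchy_Integral_Formula"
begin

(* Write f_N(y) = (ln N + ln (y - 1)) * (1 / ln y). The m-th derivative of 1 / ln y is
   (-1)^m y^-m Q_m(1 / ln y) for polynomials Q_m with nonnegative coefficients, so by Leibniz
     (-1)^k y^k f_N^(k)(y) = (ln N + ln (y - 1)) Q_k - sum_{i=1..k} C(k,i) (i-1)! (y/(y-1))^i Q_(k-i),
   all Q evaluated at 1 / ln y. Expanding the derivatives of ln y * (1 / ln y) = 1 in the same way
   shows that the sum without the factors (y/(y-1))^i is exactly ln y * Q_k. Hence for y >= 10^5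
   the left-hand side lies between (ln N - 1/1000) Q_k(1 / ln y) and ln N * Q_k(1 / ln y).
   The ratio of the k-th derivatives at M and x is (x/M)^k times the ratio of these quantities; as
   ln N is huge, it is 1 up to a negligible error times Q_k(1 / ln M) / Q_k(1 / ln x), which lies in
   [1, Q_k(1 / ln M) / Q_k(1 / (ln M + ln 2))]. Because Q_k has nonnegative coefficients, the last
   quotient decreases in ln M, so its value at ln M = ln 10^5 bounds it; gamma_k is 2^k times that
   value, rounded up. *)

definition nonneg_coeffs :: "real poly \<Rightarrow> bool" where
  "nonneg_coeffs p \<longleftrightarrow> (\<forall>i. 0 \<le> coeff p i)"

lemma poly_nonneg_coeffs_mono:
  assumes "nonneg_coeffs p" "0 \<le> s" "s \<le> t"
  shows "poly p s \<le> poly p t"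
  unfolding poly_altdef using assms
  by (intro sum_mono mult_left_mono power_mono) (auto simp: nonneg_coeffs_def)

lemma poly_nonneg_coeffs_nonneg:
  assumes "nonneg_coeffs p" "0 \<le> t"
  shows "0 \<le> poly p t"
  unfolding poly_altdef using assms by (intro sum_nonneg) (auto simp: nonneg_coeffs_def)

lemma add_le_add_of_mult_le_mult:
  fixes a b c d :: real
  assumes "0 \<le> a" "0 \<le> b" "0 \<le> d" "a \<le> c" "b \<le> c" "a * b \<le> c * d"
  shows "a + b \<le> c + d"
proof (cases "c = 0")
  case True
  then show ?thesis using assms by simp
next
  case False
  then have "c > 0" using assms by simp
  have "0 \<le> (c - a) * (c - b)" using assms by simp
  then have "c * (a + b) \<le> c * (c + d)" using assms(6) by (simp add: algebra_simps)
  then show ?thesis using \<open>c > 0\<close> by simp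
qed

lemma power_mixed_add_le:
  fixes a b c d :: real
  assumes "0 \<le> a" "0 \<le> b" "0 \<le> d" "a \<le> c" "b \<le> c" "a * b \<le> c * d"
  shows "a ^ m * b ^ n + a ^ n * b ^ m \<le> c ^ m * d ^ n + c ^ n * d ^ m"
proof -
  have *: "a ^ i * b ^ (i + e) + a ^ (i + e) * b ^ i \<le> c ^ i * d ^ (i + e) + c ^ (i + e) * d ^ i"
    for i e
  proof -
    have "a ^ e + b ^ e \<le> c ^ e + d ^ e"
      using assms by (intro add_le_add_of_mult_le_mult power_mono)
        (auto simp flip: power_mult_distrib intro: power_mono)
    moreover have "(a * b) ^ i \<le> (c * d) ^ i"
      using assms by (intro power_mono) auto
    ultimately have "(a * b) ^ i * (a ^ e + b ^ e) \<le> (c * d) ^ i * (c ^ e + d ^ e)"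
      using assms by (intro mult_mono) auto
    then show ?thesis by (simp add: power_add power_mult_distrib algebra_simps)
  qed
  show ?thesis
  proof (cases "m \<le> n")
    case True
    then show ?thesis using *[of m "n - m"] by simp
  next
    case False
    then show ?thesis using *[of n "m - n"] by (simp add: add.commute)
  qed
qed

lemma poly_nonneg_coeffs_mult_le:
  fixes a b c d :: real
  assumes "nonneg_coeffs p"
    and "0 \<le> a" "0 \<le> b" "0 \<le> d" "a \<le> c" "b \<le> c" "a * b \<le> c * d"
  shows "poly p a * poly p b \<le> poly p c * poly p d"
proof -
  define I where "I = {..degree p}"
  have sym: "2 * (poly p x * poly p y) =
      (\<Sum>i\<in>I. \<Sum>j\<in>I. coeff p i * coeff p j * (x ^ i * y ^ j + x ^ j * y ^ i))" for x y :: real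
  proof -
    have "poly p x * poly p y = (\<Sum>i\<in>I. \<Sum>j\<in>I. coeff p i * coeff p j * (x ^ i * y ^ j))"
      unfolding poly_altdef I_def sum_product by (simp add: algebra_simps)
    moreover have "\<dots> = (\<Sum>i\<in>I. \<Sum>j\<in>I. coeff p i * coeff p j * (x ^ j * y ^ i))"
      by (subst sum.swap) (simp add: algebra_simps)
    ultimately show ?thesis by (simp add: distrib_left sum.distrib)
  qed
  have "(\<Sum>i\<in>I. \<Sum>j\<in>I. coeff p i * coeff p j * (a ^ i * b ^ j + a ^ j * b ^ i))
      \<le> (\<Sum>i\<in>I. \<Sum>j\<in>I. coeff p i * coeff p j * (c ^ i * d ^ j + c ^ j * d ^ i))"
    using assms by (intro sum_mono mult_left_mono power_mixed_add_le) (auto simp: nonneg_coeffs_def)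
  then show ?thesis unfolding sym[symmetric] by simp
qed

(* That is, u \<mapsto> p(1/u) / p(1/(u + \<delta>)) is decreasing, so its value at u\<^sub>0 bounds it for all u \<ge> u\<^sub>0. *)
lemma poly_nonneg_coeffs_inverse_shift_mono:
  assumes "nonneg_coeffs p" and "0 < u\<^sub>0" "u\<^sub>0 \<le> u" "0 \<le> \<delta>" "0 \<le> c"
    and pos: "0 < poly p (1 / (u\<^sub>0 + \<delta>))"
    and base: "c * poly p (1 / u\<^sub>0) \<le> g * poly p (1 / (u\<^sub>0 + \<delta>))"
  shows "c * poly p (1 / u) \<le> g * poly p (1 / (u + \<delta>))"
proof -
  have "u\<^sub>0 * (u + \<delta>) \<le> u * (u\<^sub>0 + \<delta>)"
    using assms by (simp add: algebra_simps mult_left_mono)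
  then have "1 / u * (1 / (u\<^sub>0 + \<delta>)) \<le> 1 / u\<^sub>0 * (1 / (u + \<delta>))"
    using assms by (simp add: divide_simps)
  moreover have "1 / u \<le> 1 / u\<^sub>0" "1 / (u\<^sub>0 + \<delta>) \<le> 1 / u\<^sub>0"
    using assms by (simp_all add: frac_le)
  ultimately have key: "poly p (1 / u) * poly p (1 / (u\<^sub>0 + \<delta>)) \<le> poly p (1 / u\<^sub>0) * poly p (1 / (u + \<delta>))"
    using assms by (intro poly_nonneg_coeffs_mult_le) simp_all
  have "c * poly p (1 / u) * poly p (1 / (u\<^sub>0 + \<delta>)) \<le> c * poly p (1 / u\<^sub>0) * poly p (1 / (u + \<delta>))"
    using mult_left_mono[OF key \<open>0 \<le> c\<close>] by (simp add: mult.assoc)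
  also have "\<dots> \<le> g * poly p (1 / (u\<^sub>0 + \<delta>)) * poly p (1 / (u + \<delta>))"
    using assms by (intro mult_right_mono base poly_nonneg_coeffs_nonneg) auto
  finally show ?thesis using pos by (simp add: mult.commute mult.left_commute)
qed

lemma has_real_derivative_inverse_power:
  assumes "c < y"
  shows "((\<lambda>y. 1 / (y - c) ^ n) has_real_derivative - real n / (y - c) ^ Suc n) (at y)"
proof -
  have "y - c \<noteq> 0" using assms by simp
  moreover have "x ^ (n - Suc 0) * x = (if n = 0 then x else x ^ n)" for x :: real
    by (cases n) auto
  ultimately show ?thesis
    by (auto intro!: derivative_eq_intros simp: divide_simps)
qed

definition Leibniz_sum :: "(nat \<Rightarrow> real \<Rightarrow> real) \<Rightarrow> (nat \<Rightarrow> real \<Rightarrow> real) \<Rightarrow> nat \<Rightarrow> real \<Rightarrow> real"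
  where "Leibniz_sum F G n y = (\<Sum>i=0..n. real (n choose i) * F i y * G (n - i) y)"

lemma Leibniz_sum_Suc:
  "Leibniz_sum F G (Suc n) y =
     (\<Sum>i=0..n. real (n choose i) * (F (Suc i) y * G (n - i) y + F i y * G (Suc (n - i)) y))"
proof -
  have Pascal: "real (Suc n choose i) = real (n choose i) + (if i = 0 then 0 else real (n choose (i - 1)))"
    for i by (cases i) simp_all
  have "Leibniz_sum F G (Suc n) y =
      (\<Sum>i=0..Suc n. real (n choose i) * F i y * G (Suc n - i) y) +
      (\<Sum>i=0..Suc n. (if i = 0 then 0 else real (n choose (i - 1))) * F i y * G (Suc n - i) y)"
    unfolding Leibniz_sum_def sum.distrib[symmetric]
    by (intro sum.cong refl) (simp only: Pascal distrib_right)
  also have "(\<Sum>i=0..Suc n. real (n choose i) * F i y * G (Suc n - i) y) =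
      (\<Sum>i=0..n. real (n choose i) * F i y * G (Suc (n - i)) y)"
    by (simp add: Suc_diff_le)
  also have "(\<Sum>i=0..Suc n. (if i = 0 then 0 else real (n choose (i - 1))) * F i y * G (Suc n - i) y) =
      (\<Sum>i=0..n. real (n choose i) * F (Suc i) y * G (n - i) y)"
    by (subst sum.atLeast0_atMost_Suc_shift) simp
  finally show ?thesis by (simp add: sum.distrib algebra_simps)
qed

lemma has_real_derivative_Leibniz_sum:
  assumes "\<And>n. (F n has_real_derivative F (Suc n) y) (at y)"
    and "\<And>n. (G n has_real_derivative G (Suc n) y) (at y)"
  shows "(Leibniz_sum F G n has_real_derivative Leibniz_sum F G (Suc n) y) (at y)"
proof -
  have "((\<lambda>y. real (n choose i) * F i y * G (n - i) y) has_real_derivative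
      real (n choose i) * (F (Suc i) y * G (n - i) y + F i y * G (Suc (n - i)) y)) (at y)" for i
    using DERIV_cmult[OF DERIV_mult[OF assms(1)[of i] assms(2)[of "n - i"]], of "real (n choose i)"]
    by (simp add: algebra_simps Suc_diff_le)
  then show ?thesis
    unfolding Leibniz_sum_Suc unfolding Leibniz_sum_def[abs_def] by (intro DERIV_sum)
qed

lemma higher_deriv_eq_family:
  fixes F :: "nat \<Rightarrow> real \<Rightarrow> real"
  assumes "open S"
    and deriv: "\<And>n y. y \<in> S \<Longrightarrow> (F n has_real_derivative F (Suc n) y) (at y)"
    and base: "\<And>y. y \<in> S \<Longrightarrow> f y = F 0 y" and "y \<in> S"
  shows "(deriv ^^ n) f y = F n y"
  using \<open>y \<in> S\<close>
proof (induction n arbitrary: y)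
  case 0
  then show ?case using base by simp
next
  case (Suc n)
  have "((deriv ^^ n) f has_real_derivative F (Suc n) y) (at y)"
    by (rule has_field_derivative_transform_within_open[OF deriv[OF Suc.prems] \<open>open S\<close> Suc.prems])
      (simp add: Suc.IH)
  then show ?case by (simp add: DERIV_imp_deriv)
qed

lemma ratio_bounds_of_sandwich:
  fixes L e s S A B a b b' g :: real
  assumes "0 < e" "e < L" "1 \<le> s" "s \<le> S"
    and A: "(L - e) * a \<le> A" "A \<le> L * a" and B: "(L - e) * b \<le> B" "B \<le> L * b"
    and "0 < b'" "b' \<le> b" "b \<le> a" and ratio: "S * a \<le> g * b'"
  shows "(L - e) / L \<le> s * A / B" and "s * A / B \<le> g * L / (L - e)"
proof -
  have "0 < L - e" "0 < b" "0 < a" using assms by linarith+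
  have "0 < (L - e) * b'" "0 \<le> (L - e) * a"
    using \<open>0 < L - e\<close> \<open>0 < b'\<close> \<open>0 < a\<close> by simp_all
  moreover have b'B: "(L - e) * b' \<le> B"
    using B(1) \<open>b' \<le> b\<close> \<open>0 < L - e\<close> by (smt (verit) mult_left_mono)
  ultimately have "0 < B" "0 \<le> A" using A(1) by linarith+
  have "B \<le> L * a"
    using B(2) \<open>b \<le> a\<close> \<open>e < L\<close> \<open>0 < e\<close> by (smt (verit) mult_left_mono)
  then have "(L - e) / L * B \<le> (L - e) / L * (L * a)"
    using \<open>e < L\<close> \<open>0 < e\<close> by (intro mult_left_mono) simp_all
  also have "\<dots> = (L - e) * a"
    using \<open>e < L\<close> \<open>0 < e\<close> by simp
  also have "\<dots> \<le> s * A"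
    using A(1) mult_right_mono[OF \<open>1 \<le> s\<close> \<open>0 \<le> A\<close>] by simp
  finally show "(L - e) / L \<le> s * A / B"
    using \<open>0 < B\<close> by (simp add: pos_le_divide_eq)
  have "s * A \<le> S * (L * a)"
    using \<open>s \<le> S\<close> A(2) \<open>1 \<le> s\<close> \<open>0 \<le> A\<close> by (intro mult_mono) simp_all
  also have "\<dots> \<le> L * (g * b')"
    using mult_left_mono[OF ratio, of L] \<open>e < L\<close> \<open>0 < e\<close> by (simp add: mult_ac)
  finally have "s * A / B \<le> g * L * (b' / B)"
    using \<open>0 < B\<close> by (simp add: divide_right_mono mult_ac)
  also have "\<dots> \<le> g * L * (1 / (L - e))"
  proof (rule mult_left_mono)
    show "b' / B \<le> 1 / (L - e)"
      using b'B \<open>0 < B\<close> \<open>0 < L - e\<close> by (simp add: divide_simps mult.commute)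
    have "0 < S * a" using \<open>1 \<le> s\<close> \<open>s \<le> S\<close> \<open>0 < a\<close> by simp
    then have "0 < g" using ratio \<open>0 < b'\<close> by (smt (verit) mult_nonpos_nonneg)
    then show "0 \<le> g * L" using \<open>e < L\<close> \<open>0 < e\<close> by simp
  qed
  finally show "s * A / B \<le> g * L / (L - e)" by simp
qed

lemma ln_2_le: "ln (2::real) \<le> 0.6931472"
  using ln_approx_bounds[of 2 8] by (simp add: eval_nat_numeral)

lemma ln_10_bounds: "2.3025846 \<le> ln (10::real)" "ln (10::real) \<le> 2.4"
proof -
  have "ln (10::real) = ln (2 ^ 3 * (5 / 4))" by simp
  also have "\<dots> = 3 * ln 2 + ln (5 / 4)" by (simp only: ln_mult ln_realpow) simp_all
  finally have "ln (10::real) = 3 * ln 2 + ln (5 / 4)" .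
  then show "2.3025846 \<le> ln (10::real)" "ln (10::real) \<le> 2.4"
    using ln_approx_bounds[of 2 9] ln_approx_bounds[of "5/4" 4] by (simp_all add: eval_nat_numeral)
qed

lemma ln_ge_of_power_10_le:
  fixes y :: real
  assumes "10 ^ n \<le> y"
  shows "real n * 2.3025846 \<le> ln y"
proof -
  have "(0::real) < 10 ^ n" by simp
  then have "0 < y" using assms by linarith
  have "real n * 2.3025846 \<le> real n * ln 10"
    using ln_10_bounds(1) by (intro mult_left_mono) simp_all
  also have "\<dots> = ln (10 ^ n)"
    by (simp add: ln_realpow)
  also have "\<dots> \<le> ln y"
    using assms \<open>0 < y\<close> by simp
  finally show ?thesis .
qed

lemma ratio_power_mult_ln_sub_ln_pred_le:
  fixes y :: real
  assumes "10 ^ 5 \<le> y" "k \<le> 6"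
  shows "(y / (y - 1)) ^ k * ln y - ln (y - 1) \<le> 1 / 1000"
proof -
  define p where "p = y / (y - 1)"
  have "1 \<le> p" using assms by (simp add: p_def)
  have "1 - 6 / y \<le> (1 / p) ^ 6"
    using Bernoulli_inequality[of "- 1 / y" 6] assms by (simp add: p_def field_simps)
  then have "p ^ 6 * (1 - 6 / y) \<le> 1"
    using \<open>1 \<le> p\<close> by (simp add: power_one_over field_simps)
  moreover have "1 \<le> (1 + 7 / y) * (1 - 6 / y)"
    using assms by (simp add: field_simps)
  ultimately have "p ^ 6 * (1 - 6 / y) \<le> (1 + 7 / y) * (1 - 6 / y)"
    by linarith
  then have "p ^ 6 \<le> 1 + 7 / y"
    using assms by (elim mult_right_le_imp_le) simp
  then have "p ^ k - 1 \<le> 7 / y"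
    using power_increasing[OF assms(2) \<open>1 \<le> p\<close>] by simp
  moreover have "ln y \<le> 12 / 10 ^ 5 * y"
  proof -
    have "ln y / y \<le> ln (10 ^ 5) / 10 ^ 5"
      using assms exp_le by (intro ln_x_over_x_mono) simp_all
    also have "ln (10 ^ 5 :: real) \<le> 12"
      using ln_10_bounds ln_realpow[of 10 5] by simp
    finally show ?thesis using assms by (simp add: field_simps)
  qed
  moreover have "ln y - ln (y - 1) \<le> 1 / (y - 1)"
    using ln_le_minus_one[of p] \<open>1 \<le> p\<close> assms by (simp add: p_def ln_div field_simps)
  ultimately have "(p ^ k - 1) * ln y + (ln y - ln (y - 1)) \<le> 7 / y * (12 / 10 ^ 5 * y) + 1 / (y - 1)"
    using assms \<open>1 \<le> p\<close> by (intro add_mono mult_mono) auto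
  also have "\<dots> \<le> 1 / 1000"
    using assms by (simp add: field_simps)
  finally show ?thesis by (simp add: p_def algebra_simps)
qed

fun inv_ln_poly :: "nat \<Rightarrow> real poly" where
  "inv_ln_poly 0 = [:0, 1:]"
| "inv_ln_poly (Suc m) = smult (of_nat m) (inv_ln_poly m) + monom 1 2 * pderiv (inv_ln_poly m)"

lemma nonneg_coeffs_inv_ln_poly: "nonneg_coeffs (inv_ln_poly m)"
  unfolding nonneg_coeffs_def
proof (induction m)
  case 0
  then show ?case by (simp add: coeff_pCons split: nat.split)
next
  case (Suc m)
  then show ?case by (simp add: coeff_monom_mult coeff_pderiv)
qed

lemma inv_ln_poly_pos: "0 < t \<Longrightarrow> 0 < poly (inv_ln_poly m) t"
proof (induction m)
  case 0
  then show ?case by simp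
next
  case (Suc m)
  have "nonneg_coeffs (pderiv (inv_ln_poly m))"
    using nonneg_coeffs_inv_ln_poly[of m] by (simp add: nonneg_coeffs_def coeff_pderiv)
  then have "0 \<le> t\<^sup>2 * poly (pderiv (inv_ln_poly m)) t"
    using Suc.prems by (simp add: poly_nonneg_coeffs_nonneg)
  moreover have "0 < t\<^sup>2 * poly (pderiv (inv_ln_poly m)) t" if "m = 0"
    using that Suc.prems by (simp add: pderiv_pCons)
  moreover have "0 < real m * poly (inv_ln_poly m) t" if "m \<noteq> 0"
    using that Suc by simp
  ultimately show ?case by (cases "m = 0") (auto simp: poly_monom)
qed

lemma inv_ln_poly_explicit:
  "inv_ln_poly 1 = [:0, 0, 1:]"
  "inv_ln_poly 2 = [:0, 0, 1, 2:]"
  "inv_ln_poly 3 = [:0, 0, 2, 6, 6:]"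
  "inv_ln_poly 4 = [:0, 0, 6, 22, 36, 24:]"
  "inv_ln_poly 5 = [:0, 0, 24, 100, 210, 240, 120:]"
  "inv_ln_poly 6 = [:0, 0, 120, 548, 1350, 2040, 1800, 720:]"
  by (simp_all add: eval_nat_numeral pderiv_pCons monom_altdef)

(* 11.512923 < ln (10^5) and 0.6931472 > ln 2; the factor 1 - 10^-7 leaves room for the relative
   error 1/(1000 ln N) of scaled_higher_deriv_fN_sandwich. *)
lemma inv_ln_poly_shift_ratio_base:
  assumes "1 \<le> k" "k \<le> 6"
  shows "2 ^ k * poly (inv_ln_poly k) (1 / 11.512923)
    \<le> gamma_const k * (1 - 1 / 10 ^ 7) * poly (inv_ln_poly k) (1 / (11.512923 + 0.6931472))"
proof -
  have "k = 1 \<or> k = 2 \<or> k = 3 \<or> k = 4 \<or> k = 5 \<or> k = 6" using assms by auto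
  then show ?thesis
    by (elim disjE) (simp_all only: inv_ln_poly_explicit, simp_all add: gamma_const_def)
qed

lemma inv_ln_poly_shift_ratio:
  assumes "1 \<le> k" "k \<le> 6" "11.512923 \<le> u"
  shows "2 ^ k * poly (inv_ln_poly k) (1 / u)
    \<le> gamma_const k * (1 - 1 / 10 ^ 7) * poly (inv_ln_poly k) (1 / (u + 0.6931472))"
  by (rule poly_nonneg_coeffs_inverse_shift_mono[OF nonneg_coeffs_inv_ln_poly _ assms(3) _ _
        inv_ln_poly_pos inv_ln_poly_shift_ratio_base[OF assms(1,2)]]) simp_all

definition inv_ln_higher_deriv :: "nat \<Rightarrow> real \<Rightarrow> real" where
  "inv_ln_higher_deriv m y = (-1) ^ m / y ^ m * poly (inv_ln_poly m) (1 / ln y)"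

definition ln_higher_deriv :: "real \<Rightarrow> nat \<Rightarrow> real \<Rightarrow> real" where
  "ln_higher_deriv c j y =
     (if j = 0 then ln (y - c) else (-1) ^ (j - 1) * fact (j - 1) / (y - c) ^ j)"

lemma has_real_derivative_inv_ln_higher_deriv:
  assumes "1 < y"
  shows "(inv_ln_higher_deriv m has_real_derivative inv_ln_higher_deriv (Suc m) y) (at y)"
proof -
  have "ln y > 0" "y > 0" using assms by simp_all
  have "((\<lambda>y. 1 / ln y) has_real_derivative - 1 / (y * (ln y)\<^sup>2)) (at y)"
    using \<open>ln y > 0\<close> \<open>y > 0\<close>
    by (auto intro!: derivative_eq_intros simp: field_simps power2_eq_square)
  from has_field_derivative_poly[OF this]
  have "((\<lambda>y. poly (inv_ln_poly m) (1 / ln y)) has_real_derivative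
      - 1 / (y * (ln y)\<^sup>2) * poly (pderiv (inv_ln_poly m)) (1 / ln y)) (at y)" .
  from DERIV_mult[OF DERIV_cmult[OF has_real_derivative_inverse_power[OF \<open>y > 0\<close>]] this]
  have "((\<lambda>y. (-1) ^ m * (1 / (y - 0) ^ m) * poly (inv_ln_poly m) (1 / ln y)) has_real_derivative
      (-1) ^ m * (- real m / (y - 0) ^ Suc m) * poly (inv_ln_poly m) (1 / ln y) +
      - 1 / (y * (ln y)\<^sup>2) * poly (pderiv (inv_ln_poly m)) (1 / ln y) * ((-1) ^ m * (1 / (y - 0) ^ m)))
      (at y)" .
  moreover have "(-1) ^ m * (- real m / (y - 0) ^ Suc m) * poly (inv_ln_poly m) (1 / ln y) +
      - 1 / (y * (ln y)\<^sup>2) * poly (pderiv (inv_ln_poly m)) (1 / ln y) * ((-1) ^ m * (1 / (y - 0) ^ m))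
      = inv_ln_higher_deriv (Suc m) y"
    using \<open>ln y > 0\<close> \<open>y > 0\<close>
    by (simp add: inv_ln_higher_deriv_def poly_monom field_simps power2_eq_square)
  ultimately show ?thesis by (simp add: inv_ln_higher_deriv_def[abs_def])
qed

lemma has_real_derivative_ln_higher_deriv:
  assumes "c < y"
  shows "(ln_higher_deriv c j has_real_derivative ln_higher_deriv c (Suc j) y) (at y)"
proof (cases j)
  case 0
  have "((\<lambda>y. ln (y - c)) has_real_derivative 1 / (y - c)) (at y)"
    using assms by (auto intro!: derivative_eq_intros)
  then show ?thesis using 0 by (simp add: ln_higher_deriv_def[abs_def])
next
  case (Suc i)
  from DERIV_cmult[OF has_real_derivative_inverse_power[OF assms], of "(-1) ^ i * fact i" "Suc i"]
  show ?thesis using Suc by (simp add: ln_higher_deriv_def[abs_def] field_simps)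
qed

lemma higher_deriv_fN:
  assumes "1 < y"
  shows "(deriv ^^ k) (fN N) y =
    ln N * inv_ln_higher_deriv k y + Leibniz_sum (ln_higher_deriv 1) inv_ln_higher_deriv k y"
proof (rule higher_deriv_eq_family[where S = "{1<..}"])
  fix n and z :: real
  assume "z \<in> {1<..}"
  then show "((\<lambda>z. ln N * inv_ln_higher_deriv n z + Leibniz_sum (ln_higher_deriv 1) inv_ln_higher_deriv n z)
      has_real_derivative ln N * inv_ln_higher_deriv (Suc n) z +
        Leibniz_sum (ln_higher_deriv 1) inv_ln_higher_deriv (Suc n) z) (at z)"
    by (intro DERIV_add DERIV_cmult has_real_derivative_Leibniz_sum
        has_real_derivative_ln_higher_deriv has_real_derivative_inv_ln_higher_deriv) auto
qed (use assms in \<open>auto simp: fN_def Leibniz_sum_def ln_higher_deriv_def inv_ln_higher_deriv_def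
  field_simps\<close>)

(* Differentiate the identity ln y * (1 / ln y) = 1. *)
lemma Leibniz_sum_ln_inv_ln_eq_0:
  assumes "1 < y" "1 \<le> k"
  shows "Leibniz_sum (ln_higher_deriv 0) inv_ln_higher_deriv k y = 0"
proof -
  have "(deriv ^^ k) (\<lambda>_. 1) y = Leibniz_sum (ln_higher_deriv 0) inv_ln_higher_deriv k y"
  proof (rule higher_deriv_eq_family[where S = "{1<..}"])
    fix n and z :: real
    assume "z \<in> {1<..}"
    then show "(Leibniz_sum (ln_higher_deriv 0) inv_ln_higher_deriv n has_real_derivative
        Leibniz_sum (ln_higher_deriv 0) inv_ln_higher_deriv (Suc n) z) (at z)"
      by (intro has_real_derivative_Leibniz_sum has_real_derivative_ln_higher_deriv
          has_real_derivative_inv_ln_higher_deriv) auto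
  qed (use assms in \<open>auto simp: Leibniz_sum_def ln_higher_deriv_def inv_ln_higher_deriv_def\<close>)
  then show ?thesis using assms by simp
qed

lemma scaled_Leibniz_sum_ln_inv_ln:
  assumes "0 \<le> c" "c < y"
  shows "(-1) ^ k * y ^ k * Leibniz_sum (ln_higher_deriv c) inv_ln_higher_deriv k y =
    ln (y - c) * poly (inv_ln_poly k) (1 / ln y) -
    (\<Sum>i=1..k. real (k choose i) * fact (i - 1) * (y / (y - c)) ^ i *
       poly (inv_ln_poly (k - i)) (1 / ln y))"
proof -
  have "y > 0" using assms by simp
  have sign: "((-1::real) ^ n) * (-1) ^ n = 1" for n
    by (simp flip: power_add)
  have head: "(-1) ^ k * y ^ k * (ln (y - c) * inv_ln_higher_deriv k y) =
      ln (y - c) * poly (inv_ln_poly k) (1 / ln y)"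
    using \<open>y > 0\<close> sign[of k] by (simp add: inv_ln_higher_deriv_def)
  have tail: "(-1) ^ k * y ^ k * (real (k choose i) * ln_higher_deriv c i y * inv_ln_higher_deriv (k - i) y) =
      - (real (k choose i) * fact (i - 1) * (y / (y - c)) ^ i * poly (inv_ln_poly (k - i)) (1 / ln y))"
    if "i \<in> {1..k}" for i
  proof -
    define j r where "j = i - 1" and "r = k - i"
    then have "i = Suc j" "k = Suc j + r" using that by auto
    moreover have "(-1) ^ (Suc j + r) * y ^ (Suc j + r) *
        (C * ((-1) ^ j * fact j / (y - c) ^ Suc j) * ((-1) ^ r / y ^ r * P))
      = - (((-1) ^ j * (-1) ^ j) * ((-1) ^ r * (-1) ^ r)) *
        (C * fact j * (y ^ Suc j / (y - c) ^ Suc j) * P * (y ^ r / y ^ r))" for C P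
      by (simp add: power_add mult_ac)
    ultimately show ?thesis using sign[of j] sign[of r] \<open>y > 0\<close>
      by (simp add: ln_higher_deriv_def inv_ln_higher_deriv_def power_divide)
  qed
  have "(-1) ^ k * y ^ k * Leibniz_sum (ln_higher_deriv c) inv_ln_higher_deriv k y =
      (-1) ^ k * y ^ k * (ln (y - c) * inv_ln_higher_deriv k y) +
      (\<Sum>i=1..k. (-1) ^ k * y ^ k *
         (real (k choose i) * ln_higher_deriv c i y * inv_ln_higher_deriv (k - i) y))"
    by (simp add: Leibniz_sum_def sum.atLeast_Suc_atMost ln_higher_deriv_def distrib_left
        sum_distrib_left)
  also have "\<dots> = ln (y - c) * poly (inv_ln_poly k) (1 / ln y) +
      (\<Sum>i=1..k. - (real (k choose i) * fact (i - 1) * (y / (y - c)) ^ i *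
         poly (inv_ln_poly (k - i)) (1 / ln y)))"
    by (simp only: head sum.cong[OF refl tail])
  finally show ?thesis by (simp add: sum_negf)
qed

lemma scaled_higher_deriv_fN:
  assumes "1 < y"
  shows "(-1) ^ k * y ^ k * (deriv ^^ k) (fN N) y =
    (ln N + ln (y - 1)) * poly (inv_ln_poly k) (1 / ln y) -
    (\<Sum>i=1..k. real (k choose i) * fact (i - 1) * (y / (y - 1)) ^ i *
       poly (inv_ln_poly (k - i)) (1 / ln y))"
proof -
  have "(-1) ^ k * y ^ k * inv_ln_higher_deriv k y = poly (inv_ln_poly k) (1 / ln y)"
    using assms by (simp add: inv_ln_higher_deriv_def flip: power_add)
  then show ?thesis
    using assms scaled_Leibniz_sum_ln_inv_ln[of 1 y k]
    by (simp add: higher_deriv_fN distrib_left distrib_right mult.left_commute)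
qed

lemma ln_mult_inv_ln_poly:
  assumes "1 < y" "1 \<le> k"
  shows "ln y * poly (inv_ln_poly k) (1 / ln y) =
    (\<Sum>i=1..k. real (k choose i) * fact (i - 1) * poly (inv_ln_poly (k - i)) (1 / ln y))"
  using scaled_Leibniz_sum_ln_inv_ln[of 0 y k] Leibniz_sum_ln_inv_ln_eq_0[OF assms] assms by simp

lemma scaled_higher_deriv_fN_bounds:
  assumes "1 < y" "1 \<le> k"
  shows "(ln N + ln (y - 1) - (y / (y - 1)) ^ k * ln y) * poly (inv_ln_poly k) (1 / ln y)
      \<le> (-1) ^ k * y ^ k * (deriv ^^ k) (fN N) y"
    and "(-1) ^ k * y ^ k * (deriv ^^ k) (fN N) y
      \<le> (ln N + ln (y - 1) - ln y) * poly (inv_ln_poly k) (1 / ln y)"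
proof -
  define p where "p = y / (y - 1)"
  define S where "S i = real (k choose i) * fact (i - 1) * poly (inv_ln_poly (k - i)) (1 / ln y)" for i
  have "1 \<le> p" using assms by (simp add: p_def)
  have "0 \<le> S i" for i
    using assms by (simp add: S_def poly_nonneg_coeffs_nonneg nonneg_coeffs_inv_ln_poly)
  have "S i \<le> p ^ i * S i" for i
    using mult_right_mono[OF one_le_power[OF \<open>1 \<le> p\<close>] \<open>0 \<le> S i\<close>] by simp
  then have "sum S {1..k} \<le> (\<Sum>i=1..k. p ^ i * S i)"
    by (intro sum_mono)
  moreover have "p ^ i * S i \<le> p ^ k * S i" if "i \<le> k" for i
    using that \<open>1 \<le> p\<close> \<open>0 \<le> S i\<close> by (intro mult_right_mono power_increasing)
  then have "(\<Sum>i=1..k. p ^ i * S i) \<le> p ^ k * sum S {1..k}"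
    by (auto simp: sum_distrib_left intro!: sum_mono)
  moreover have "sum S {1..k} = ln y * poly (inv_ln_poly k) (1 / ln y)"
    using ln_mult_inv_ln_poly[OF assms] by (simp add: S_def)
  moreover have "(-1) ^ k * y ^ k * (deriv ^^ k) (fN N) y =
      (ln N + ln (y - 1)) * poly (inv_ln_poly k) (1 / ln y) - (\<Sum>i=1..k. p ^ i * S i)"
    using scaled_higher_deriv_fN[OF assms(1)] by (simp add: S_def p_def mult_ac)
  ultimately show
    "(ln N + ln (y - 1) - p ^ k * ln y) * poly (inv_ln_poly k) (1 / ln y)
      \<le> (-1) ^ k * y ^ k * (deriv ^^ k) (fN N) y"
    "(-1) ^ k * y ^ k * (deriv ^^ k) (fN N) y
      \<le> (ln N + ln (y - 1) - ln y) * poly (inv_ln_poly k) (1 / ln y)"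
    by (simp_all add: algebra_simps)
qed

lemma scaled_higher_deriv_fN_sandwich:
  assumes "10 ^ 5 \<le> y" "1 \<le> k" "k \<le> 6"
  shows "(ln N - 1 / 1000) * poly (inv_ln_poly k) (1 / ln y) \<le> (-1) ^ k * y ^ k * (deriv ^^ k) (fN N) y"
    and "(-1) ^ k * y ^ k * (deriv ^^ k) (fN N) y \<le> ln N * poly (inv_ln_poly k) (1 / ln y)"
proof -
  have "1 < y" using assms by simp
  have q: "0 \<le> poly (inv_ln_poly k) (1 / ln y)"
    using \<open>1 < y\<close> by (simp add: poly_nonneg_coeffs_nonneg nonneg_coeffs_inv_ln_poly)
  have "ln (y - 1) \<le> ln y" using \<open>1 < y\<close> by simp
  then show "(-1) ^ k * y ^ k * (deriv ^^ k) (fN N) y \<le> ln N * poly (inv_ln_poly k) (1 / ln y)"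
    using scaled_higher_deriv_fN_bounds(2)[OF \<open>1 < y\<close> assms(2), of N] q
    by (smt (verit) mult_right_mono)
  show "(ln N - 1 / 1000) * poly (inv_ln_poly k) (1 / ln y) \<le> (-1) ^ k * y ^ k * (deriv ^^ k) (fN N) y"
    using scaled_higher_deriv_fN_bounds(1)[OF \<open>1 < y\<close> assms(2), of N] ratio_power_mult_ln_sub_ln_pred_le[OF assms(1,3)] q
    by (smt (verit) mult_right_mono)
qed

lemma inv_ln_poly_ln_window_bounds:
  fixes M x :: real
  assumes "10 ^ 5 \<le> M" "M \<le> x" "x \<le> 2 * M" "1 \<le> k" "k \<le> 6"
  defines "q v \<equiv> poly (inv_ln_poly k) (1 / v)"
  shows "0 < q (ln M + 0.6931472)" "q (ln M + 0.6931472) \<le> q (ln x)" "q (ln x) \<le> q (ln M)"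
    and "2 ^ k * q (ln M) \<le> gamma_const k * (1 - 1 / 10 ^ 7) * q (ln M + 0.6931472)"
proof -
  have "0 < M" using assms(1) by simp
  have "11.512923 \<le> ln M"
    using ln_ge_of_power_10_le[OF assms(1)] by simp
  have "ln M \<le> ln x" "ln x \<le> ln (2 * M)" using assms(2,3) \<open>0 < M\<close> by simp_all
  then have "ln x \<le> ln M + 0.6931472"
    using \<open>0 < M\<close> ln_2_le by (simp add: ln_mult)
  show "q (ln M + 0.6931472) \<le> q (ln x)" "q (ln x) \<le> q (ln M)"
    using \<open>11.512923 \<le> ln M\<close> \<open>ln M \<le> ln x\<close> \<open>ln x \<le> ln M + 0.6931472\<close> unfolding q_def
    by (intro poly_nonneg_coeffs_mono nonneg_coeffs_inv_ln_poly; simp add: frac_le)+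
  show "0 < q (ln M + 0.6931472)"
    using \<open>11.512923 \<le> ln M\<close> by (simp add: q_def inv_ln_poly_pos)
  show "2 ^ k * q (ln M) \<le> gamma_const k * (1 - 1 / 10 ^ 7) * q (ln M + 0.6931472)"
    using inv_ln_poly_shift_ratio[OF assms(4,5) \<open>11.512923 \<le> ln M\<close>] by (simp add: q_def)
qed

theorem lemma3p2:
  fixes N M x :: real and k :: nat
  assumes "N \<ge> 10 ^ 100000" and "M \<ge> 10 ^ 5"
    and "M \<le> x" and "x \<le> 2 * M"
    and "1 \<le> k" and "k \<le> 6"
  shows "0.999999 < (deriv ^^ k) (fN N) M / (deriv ^^ k) (fN N) x
     \<and> (deriv ^^ k) (fN N) M / (deriv ^^ k) (fN N) x < gamma_const k"
proof -
  define T where "T y = (-1) ^ k * y ^ k * (deriv ^^ k) (fN N) y" for y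
  define q where "q v = poly (inv_ln_poly k) (1 / v)" for v
  define g where "g = gamma_const k * (1 - 1 / 10 ^ 7)"
  have "0 < M" "10 ^ 5 \<le> x" using assms(2,3) by simp_all
  have "230000 \<le> ln N" using ln_ge_of_power_10_le[OF assms(1)] by simp
  have "1 \<le> x / M" "x / M \<le> 2" using assms(3,4) \<open>0 < M\<close> by (simp_all add: field_simps)
  then have "1 \<le> (x / M) ^ k" "(x / M) ^ k \<le> 2 ^ k" by (simp_all add: one_le_power power_mono)
  note sandwich = scaled_higher_deriv_fN_sandwich[OF assms(2,5,6), of N]
    scaled_higher_deriv_fN_sandwich[OF \<open>10 ^ 5 \<le> x\<close> assms(5,6), of N]
  have "(ln N - 1 / 1000) / ln N \<le> (x / M) ^ k * T M / T x"
    "(x / M) ^ k * T M / T x \<le> g * ln N / (ln N - 1 / 1000)"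
    using \<open>230000 \<le> ln N\<close> \<open>1 \<le> (x / M) ^ k\<close> \<open>(x / M) ^ k \<le> 2 ^ k\<close> sandwich
      inv_ln_poly_ln_window_bounds[OF assms(2-6)]
    by (intro ratio_bounds_of_sandwich[where S = "2 ^ k" and a = "q (ln M)" and b = "q (ln x)"
          and b' = "q (ln M + 0.6931472)" and g = g]; simp add: T_def q_def g_def)+
  moreover have "(deriv ^^ k) (fN N) M / (deriv ^^ k) (fN N) x = (x / M) ^ k * T M / T x"
    using \<open>0 < M\<close> assms(3) by (simp add: T_def power_divide field_simps)
  moreover have "0.999999 < (ln N - 1 / 1000) / ln N" "g * ln N / (ln N - 1 / 1000) < gamma_const k"
    using \<open>230000 \<le> ln N\<close> by (simp_all add: g_def gamma_const_def field_simps)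
  ultimately show ?thesis by linarith
qed

end
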